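(* For $x\in(0,1)$ let $I(x,1)=\exp\!\big(\frac{x\ln x}{x-1}-1\big)$ and $A_p(x,1)=\big(\frac{x^p+1}{2}\big)^{1/p}$ for $p\ne0$, $A_0(x,1)=\sqrt{x}$. For $p\in(0,2/3]$ and all $x\in(0,1)$, $$A_p(x,1)<I(x,1)<A_p(x,1)^{p/\ln2}<e^{-1}2^{1/p}A_p(x,1),$$ and the coefficients $1$ and $e^{-1}2^{1/p}$ are best possible, i.e. $1$ is the largest $c$ and $e^{-1}2^{1/p}$ is the smallest $C$ such that $cA_p(x,1)\le I(x,1)\le CA_p(x,1)$ for all $x\in(0,1)$. For $p\ge1$ all three inequalities are reversed. Moreover, for each fixed $x\in(0,1)$, $p\mapsto A_p(x,1)$ is increasing on $\mathbb R$, $p\mapsto A_p(x,1)^{p/\ln2}$ is decreasing on $\mathbb R$, and $p\mapsto e^{-1}2^{1/p}A_p(x,1)$ is decreasing on $(0,\infty)$.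
   Context: $I$ is the identric mean and $A_p$ the power mean, evaluated at $(x,1)$. *)

theory Defs
  imports Complex_Main
begin

definition identric1 :: "real \<Rightarrow> real" where
  "identric1 x = exp (x * ln x / (x - 1) - 1)"

definition powmean1 :: "real \<Rightarrow> real \<Rightarrow> real" where
  "powmean1 p x = (if p = 0 then sqrt x else ((x powr p + 1) / 2) powr (1 / p))"

end

theory Submission
  imports Defs "HOL-Analysis.Harmonic_Numbers" "HOL-Real_Asymp.Real_Asymp"
begin

(*
  For I against A_(2/3),
  A_(2/3)^(2/(3 ln 2)), A_1 and A_1^(1/ln 2), the difference of logarithms is a positive multiple
  of a function Q with Q(1) = 0 whose derivative is a positive multiple of a function R; R is
  monotone with R(1) = 0, or vanishes at 0 and 1 while its derivative changes sign once, so R < 0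
  and Q decreases to 0.  Monotonicity in p spreads these from p = 2/3 and p = 1 to p <= 2/3 and
  p >= 1: A_p increases by strict convexity of s^r (negative p via A_(-p) = x / A_p),
  A_p^(p/ln 2) = ((x^p + 1)/2)^(1/ln 2) decreases, and e^(-1) 2^(1/p) A_p = e^(-1) (x^p + 1)^(1/p)
  decreases like an l^p norm.  The best constants are the limits of I / A_p at x -> 1 and x -> 0.
*)

lemma ln_2_gt_two_thirds: "ln (2::real) > 2/3"
proof -
  have "ln (2::real) \<ge> (\<Sum>k<2. 2*((2-1)/(2+1))^(2*k+1) / of_nat (2*k+1))"
    using ln_approx_bounds[of 2 2] by simp
  also have "(\<Sum>k<2. 2*((2-1)/(2+1))^(2*k+1) / of_nat (2*k+1)) = (56/81::real)"
    by (simp add: eval_nat_numeral)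
  finally show ?thesis by simp
qed

lemma one_plus_power2_pos: "0 < 1 + (x::real)^2"
  using zero_le_power2[of x] by linarith

lemma powr_plus_one_pos: "0 < (x::real) powr p + 1"
  using powr_ge_zero[of x p] by linarith

lemma deriv_pos_interior_imp_less:
  fixes f f' :: "real \<Rightarrow> real"
  assumes "a < b"
    and deriv: "\<And>x. a \<le> x \<Longrightarrow> x \<le> b \<Longrightarrow> (f has_real_derivative f' x) (at x)"
    and "\<And>x. a < x \<Longrightarrow> x < b \<Longrightarrow> f' x > 0"
  shows "f a < f b"
proof (rule DERIV_pos_imp_increasing_open[OF \<open>a < b\<close>])
  show "\<exists>y. (f has_real_derivative y) (at x) \<and> y > 0" if "a < x" "x < b" for x
    using that assms(2,3) by (intro exI[of _ "f' x"]) simp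
  show "continuous_on {a..b} f"
    using deriv by (meson DERIV_isCont atLeastAtMost_iff continuous_at_imp_continuous_on)
qed

lemma deriv_neg_interior_imp_greater:
  fixes f f' :: "real \<Rightarrow> real"
  assumes "a < b"
    and "\<And>x. a \<le> x \<Longrightarrow> x \<le> b \<Longrightarrow> (f has_real_derivative f' x) (at x)"
    and "\<And>x. a < x \<Longrightarrow> x < b \<Longrightarrow> f' x < 0"
  shows "f a > f b"
  using deriv_pos_interior_imp_less[of a b "\<lambda>x. - f x" "\<lambda>x. - f' x"] assms
  by (auto intro: derivative_intros)

lemma neg_between_zeros_if_deriv_sign_increasing:
  fixes f g w :: "real \<Rightarrow> real"
  assumes "a < x" "x < b" "f a = 0" "f b = 0"
    and deriv: "\<And>s. a \<le> s \<Longrightarrow> s \<le> b \<Longrightarrow> (f has_real_derivative w s * g s) (at s)"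
    and w: "\<And>s. a < s \<Longrightarrow> s < b \<Longrightarrow> w s > 0"
    and g: "strict_mono_on {a<..<b} g"
  shows "f x < 0"
proof (cases "g x \<ge> 0")
  case True
  have "f x < f b"
  proof (rule deriv_pos_interior_imp_less[OF \<open>x < b\<close>])
    fix s assume "x < s" "s < b"
    then have "g x < g s" using g assms(1) by (auto intro: strict_mono_onD)
    then show "w s * g s > 0" using True w \<open>x < s\<close> \<open>s < b\<close> assms(1) by simp
  qed (use deriv assms(1) in auto)
  then show ?thesis using \<open>f b = 0\<close> by simp
next
  case False
  have "f a > f x"
  proof (rule deriv_neg_interior_imp_greater[OF \<open>a < x\<close>])
    fix s assume "a < s" "s < x"
    then have "g s < g x" using g assms(2) by (auto intro: strict_mono_onD)
    then show "w s * g s < 0" using False w \<open>a < s\<close> \<open>s < x\<close> assms(2) by (simp add: mult_pos_neg)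
  qed (use deriv assms(2) in auto)
  then show ?thesis using \<open>f a = 0\<close> by simp
qed

text \<open>The next two inequalities are written in \<open>t\<close> with \<open>x = t\<^sup>3\<close>, which turns
  \<open>powmean1 (2/3) x\<close> into \<open>((1 + t\<^sup>2) / 2) powr (3/2)\<close>.\<close>

lemma ln_powmean_two_thirds_less_ln_identric:
  fixes t :: real
  assumes t: "0 < t" "t < 1"
  shows "3/2 * ln ((1 + t^2) / 2) < 3 * t^3 * ln t / (t^3 - 1) - 1"
proof -
  define R where "R s = - 2/3 * s^3 + 2/3 + ln ((1 + s^2) / 2) - 2/3 * s^2 * (1 - s^3) / (1 + s^2)"
    for s :: real
  define Q where "Q s = - ln s - (1 / s^3 - 1) * (2 + 3 * ln ((1 + s^2) / 2)) / 6" for s :: real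
  have pos: "1 + s^2 > 0" "1 + s^2 \<noteq> 0" for s :: real
    using one_plus_power2_pos[of s] by auto
  have R_neg: "R s < 0" if "0 < s" "s < 1" for s
  proof -
    have "R s < R 1"
    proof (rule deriv_pos_interior_imp_less[OF \<open>s < 1\<close>])
      show "(R has_real_derivative 2 * u * (1 - u)^3 / (3 * (1 + u^2)^2)) (at u)" for u
        unfolding R_def[abs_def]
        apply (rule derivative_eq_intros refl | (use pos in \<open>simp; fail\<close>))+
        using pos(1)[of u] by (simp add: divide_simps) algebra
    qed (use that pos in \<open>auto intro!: divide_pos_pos\<close>)
    then show ?thesis by (simp add: R_def)
  qed
  have "Q t > Q 1"
  proof (rule deriv_neg_interior_imp_greater[OF \<open>t < 1\<close>])
    show "(Q has_real_derivative 3 * R u / (2 * u^4)) (at u)" if "t \<le> u" for u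
      unfolding Q_def[abs_def] R_def
      apply (rule derivative_eq_intros refl | (use pos that t in \<open>simp; fail\<close>))+
      using pos(1)[of u] that t by (simp add: divide_simps) algebra
  qed (use t R_neg in \<open>auto intro!: divide_neg_pos\<close>)
  define T where "T = t^3"
  have T: "0 < T" "T < 1"
    using t by (simp_all add: T_def power_less_one_iff)
  have "3 * T * ln t / (T - 1) - 1 - 3/2 * ln ((1 + t^2) / 2) = 3 * T / (1 - T) * Q t"
    unfolding Q_def T_def[symmetric] using T by (simp add: field_simps)
  moreover have "3 * T / (1 - T) * Q t > 0"
    using T \<open>Q t > Q 1\<close> by (simp add: Q_def)
  ultimately show ?thesis
    by (simp add: T_def)
qed

lemma ln_identric_less_ln_powmean_two_thirds_div_ln2:
  fixes t :: real
  assumes t: "0 < t" "t < 1"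
  shows "3 * t^3 * ln t / (t^3 - 1) - 1 < ln ((1 + t^2) / 2) / ln 2"
proof -
  define c where "c = ln (2::real)"
  have c: "c > 2/3"
    using ln_2_gt_two_thirds by (simp add: c_def)
  define P where "P s = 2 - 9 * c * s + 6 * s^2 + (10 - 18 * c) * s^3 + (6 - 9 * c) * s^5" for s :: real
  define R where "R s = c * s^3 - ln (1 + s^2) + 2/3 * s^2 * (1 - s^3) / (1 + s^2)" for s :: real
  define Q where "Q s = ln s + (1 / s^3 - 1) * ln (1 + s^2) / (3 * c)" for s :: real
  have pos: "1 + s^2 > 0" "1 + s^2 \<noteq> 0" for s :: real
    using one_plus_power2_pos[of s] by auto
  have P_decreasing: "strict_mono_on {0<..<1} (\<lambda>s. - P s)"
  proof (rule strict_mono_onI)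
    fix a b :: real assume ab: "a \<in> {0<..<1}" "b \<in> {0<..<1}" "a < b"
    have "P a > P b"
    proof (rule deriv_neg_interior_imp_greater[OF \<open>a < b\<close>])
      show "(P has_real_derivative - 9 * c + 12 * s + 3 * (10 - 18 * c) * s^2 + 5 * (6 - 9 * c) * s^4)
          (at s)" for s
        unfolding P_def by (rule derivative_eq_intros refl | simp)+ (simp add: algebra_simps)
      fix s assume "a < s" "s < b"
      then have s: "0 < s" "s < 1" using ab by auto
      have "(30 - 54 * c) * s^2 \<le> - 6 * s^2"
        using c by (intro mult_right_mono) auto
      moreover have "(30 - 45 * c) * s^4 \<le> 0"
        using c by (intro mult_nonpos_nonneg) auto
      moreover have "0 < (1 - s)^2" using s by simp
      ultimately show "- 9 * c + 12 * s + 3 * (10 - 18 * c) * s^2 + 5 * (6 - 9 * c) * s^4 < 0"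
        using c by (simp add: algebra_simps power2_diff)
    qed
    then show "- P a < - P b" by simp
  qed
  have R_neg: "R s < 0" if "0 < s" "s < 1" for s
  proof (rule neg_between_zeros_if_deriv_sign_increasing[OF that _ _ _ _ P_decreasing])
    show "(R has_real_derivative s / (3 * (1 + s^2)^2) * - P s) (at s)" for s
      unfolding R_def[abs_def] P_def
      apply (rule derivative_eq_intros refl | (use pos in \<open>simp; fail\<close>))+
      using pos(1)[of s] by (simp add: divide_simps) algebra
  qed (use pos in \<open>simp_all add: R_def c_def\<close>)
  have "Q t > Q 1"
  proof (rule deriv_neg_interior_imp_greater[OF \<open>t < 1\<close>])
    show "(Q has_real_derivative R u / (c * u^4)) (at u)" if "t \<le> u" for u
      unfolding Q_def[abs_def] R_def
      apply (rule derivative_eq_intros refl | (use pos that t c in \<open>simp; fail\<close>))+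
      using pos(1)[of u] that t c by (simp add: divide_simps) algebra
  qed (use t c R_neg in \<open>auto intro!: divide_neg_pos\<close>)
  define T where "T = t^3"
  have T: "0 < T" "T < 1"
    using t by (simp_all add: T_def power_less_one_iff)
  have "ln ((1 + t^2) / 2) / c - (3 * T * ln t / (T - 1) - 1) = 3 * T / (1 - T) * Q t"
    unfolding Q_def T_def[symmetric] c_def using T pos(1)[of t]
    by (simp add: ln_div field_simps)
  moreover have "3 * T / (1 - T) * Q t > 0"
    using T \<open>Q t > Q 1\<close> by (simp add: Q_def)
  ultimately show ?thesis
    by (simp add: T_def c_def)
qed

lemma ln_identric_less_ln_arith_mean:
  fixes x :: real
  assumes x: "0 < x" "x < 1"
  shows "x * ln x / (x - 1) - 1 < ln ((1 + x) / 2)"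
proof -
  define R where "R s = s - 1 - ln ((1 + s) / 2) + s * (1 - s) / (1 + s)" for s :: real
  define Q where "Q s = ln s + (1 / s - 1) * (1 + ln ((1 + s) / 2))" for s :: real
  have R_neg: "R s < 0" if "0 < s" "s < 1" for s
  proof -
    have "R s < R 1"
    proof (rule deriv_pos_interior_imp_less[OF \<open>s < 1\<close>])
      show "(R has_real_derivative (1 - u) / (1 + u)^2) (at u)" if "s \<le> u" for u
        unfolding R_def[abs_def]
        apply (rule derivative_eq_intros refl | (use that \<open>0 < s\<close> in \<open>simp; fail\<close>))+
        using that \<open>0 < s\<close> by (simp add: divide_simps) algebra
    qed (use that in auto)
    then show ?thesis by (simp add: R_def)
  qed
  have "Q x > Q 1"
  proof (rule deriv_neg_interior_imp_greater[OF \<open>x < 1\<close>])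
    show "(Q has_real_derivative R u / u^2) (at u)" if "x \<le> u" for u
      unfolding Q_def[abs_def] R_def
      apply (rule derivative_eq_intros refl | (use that x in \<open>simp; fail\<close>))+
      using that x by (simp add: divide_simps) algebra
  qed (use x R_neg in \<open>auto intro!: divide_neg_pos\<close>)
  then have "x / (1 - x) * Q x > 0"
    using x by (simp add: Q_def)
  moreover have "ln ((1 + x) / 2) - (x * ln x / (x - 1) - 1) = x / (1 - x) * Q x"
    unfolding Q_def using x by (simp add: field_simps)
  ultimately show ?thesis
    by simp
qed

lemma ln_arith_mean_div_ln2_less_ln_identric:
  fixes x :: real
  assumes x: "0 < x" "x < 1"
  shows "ln ((1 + x) / 2) / ln 2 < x * ln x / (x - 1) - 1"
proof -
  define c where "c = ln (2::real)"
  have c: "0 < c" "c < 1"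
    using ln_2_less_1 by (simp_all add: c_def)
  define q where "q s = - c + (3 - 2 * c) * s + (1 - c) * s^2" for s :: real
  define R where "R s = - c * s + ln (1 + s) - s * (1 - s) / (1 + s)" for s :: real
  define Q where "Q s = - ln s - (1 / s - 1) * ln (1 + s) / c" for s :: real
  have q_increasing: "strict_mono_on {0<..<1} q"
  proof (rule strict_mono_onI)
    fix a b :: real assume ab: "a \<in> {0<..<1}" "b \<in> {0<..<1}" "a < b"
    have "q b - q a = (b - a) * ((3 - 2 * c) + (1 - c) * (a + b))"
      by (simp add: q_def algebra_simps power2_eq_square)
    moreover have "(3 - 2 * c) + (1 - c) * (a + b) > 0"
      using c ab by (intro add_pos_nonneg mult_nonneg_nonneg) auto
    ultimately show "q a < q b"
      using ab by (smt (verit) mult_pos_pos)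
  qed
  have R_neg: "R s < 0" if "0 < s" "s < 1" for s
  proof (rule neg_between_zeros_if_deriv_sign_increasing[OF that _ _ _ _ q_increasing])
    show "(R has_real_derivative 1 / (1 + u)^2 * q u) (at u)" if "0 \<le> u" for u
      unfolding R_def[abs_def] q_def
      apply (rule derivative_eq_intros refl | (use that in \<open>simp; fail\<close>))+
      using that by (simp add: divide_simps) algebra
  qed (simp_all add: R_def c_def)
  have "Q x > Q 1"
  proof (rule deriv_neg_interior_imp_greater[OF \<open>x < 1\<close>])
    show "(Q has_real_derivative R u / (c * u^2)) (at u)" if "x \<le> u" for u
      unfolding Q_def[abs_def] R_def
      apply (rule derivative_eq_intros refl | (use that x c in \<open>simp; fail\<close>))+
      using that x c by (simp add: divide_simps) algebra
  qed (use x c R_neg in \<open>auto intro!: divide_neg_pos\<close>)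
  then have "x / (1 - x) * Q x > 0"
    using x by (simp add: Q_def)
  moreover have "(x * ln x / (x - 1) - 1) - ln ((1 + x) / 2) / c = x / (1 - x) * Q x"
    unfolding Q_def c_def using x by (simp add: ln_div field_simps)
  ultimately show ?thesis
    by (simp add: c_def)
qed

lemma powmean1_nonzero: "p \<noteq> 0 \<Longrightarrow> powmean1 p x = ((x powr p + 1) / 2) powr (1 / p)"
  by (simp add: powmean1_def)

lemma powmean1_pos: "0 < x \<Longrightarrow> 0 < powmean1 p x"
  using powr_plus_one_pos[of x p] by (simp add: powmean1_def)

lemma powmean1_uminus:
  assumes "0 < x"
  shows "powmean1 (- p) x = x / powmean1 p x"
proof (cases "p = 0")
  case True
  then show ?thesis
    using assms by (simp add: powmean1_def real_div_sqrt)
next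
  case False
  define m where "m = (x powr p + 1) / 2"
  have m: "0 < m"
    using powr_plus_one_pos[of x p] by (simp add: m_def)
  have "(x powr - p + 1) / 2 = m / x powr p"
    using assms by (simp add: m_def powr_minus field_simps)
  then have "powmean1 (- p) x = m powr (- (1 / p)) / (x powr p) powr (- (1 / p))"
    using False assms m by (simp add: powmean1_nonzero powr_divide)
  also have "(x powr p) powr (- (1 / p)) = inverse x"
    using False assms by (simp add: powr_powr powr_minus)
  also have "m powr (- (1 / p)) / inverse x = x / m powr (1 / p)"
    by (simp add: powr_minus divide_inverse)
  finally show ?thesis
    using False by (simp add: powmean1_nonzero m_def)
qed

lemma powmean1_powr_div_ln2:
  assumes "0 < x"
  shows "powmean1 p x powr (p / ln 2) = ((x powr p + 1) / 2) powr (1 / ln 2)"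
proof (cases "p = 0")
  case True
  then show ?thesis
    using assms by (simp add: powmean1_def)
next
  case False
  then show ?thesis
    by (simp add: powmean1_nonzero powr_powr)
qed

lemma identric1_cube: "0 < t \<Longrightarrow> identric1 (t^3) = exp (3 * t^3 * ln t / (t^3 - 1) - 1)"
  by (simp add: identric1_def ln_realpow)

lemma powmean1_two_thirds_cube:
  assumes "0 < t"
  shows "powmean1 (2/3) (t^3) = ((1 + t^2) / 2) powr (3/2)"
proof -
  have "(t^3) powr (2/3) = t^2"
    using powr_powr[of t 3 "2/3"] assms by simp
  then show ?thesis
    by (simp add: powmean1_nonzero add.commute)
qed

lemma obtain_cube_root:
  fixes x :: real
  assumes "0 < x" "x < 1"
  obtains t where "x = t^3" "0 < t" "t < 1"
  using assms by (intro that[of "root 3 x"]) (simp_all add: real_root_pow_pos)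

lemma powmean1_two_thirds_less_identric1:
  assumes "0 < x" "x < 1"
  shows "powmean1 (2/3) x < identric1 x"
proof -
  obtain t where t: "x = t^3" "0 < t" "t < 1"
    using obtain_cube_root[OF assms] .
  have "powmean1 (2/3) x = exp (3/2 * ln ((1 + t^2) / 2))"
    using t one_plus_power2_pos[of t] by (simp add: powmean1_two_thirds_cube powr_def)
  also have "\<dots> < identric1 x"
    using ln_powmean_two_thirds_less_ln_identric[OF t(2,3)] t by (simp add: identric1_cube)
  finally show ?thesis .
qed

lemma identric1_less_powmean1_two_thirds_powr:
  assumes "0 < x" "x < 1"
  shows "identric1 x < powmean1 (2/3) x powr ((2/3) / ln 2)"
proof -
  obtain t where t: "x = t^3" "0 < t" "t < 1"
    using obtain_cube_root[OF assms] .
  have "identric1 x < exp (ln ((1 + t^2) / 2) / ln 2)"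
    using ln_identric_less_ln_powmean_two_thirds_div_ln2[OF t(2,3)] t by (simp add: identric1_cube)
  also have "\<dots> = powmean1 (2/3) x powr ((2/3) / ln 2)"
    using t one_plus_power2_pos[of t] by (simp add: powmean1_two_thirds_cube powr_powr powr_def)
  finally show ?thesis .
qed

lemma identric1_less_powmean1_one:
  assumes "0 < x" "x < 1"
  shows "identric1 x < powmean1 1 x"
proof -
  have "identric1 x < exp (ln ((1 + x) / 2))"
    using ln_identric_less_ln_arith_mean[OF assms] by (simp add: identric1_def)
  then show ?thesis
    using assms by (simp add: powmean1_nonzero add.commute)
qed

lemma powmean1_one_powr_less_identric1:
  assumes "0 < x" "x < 1"
  shows "powmean1 1 x powr (1 / ln 2) < identric1 x"
proof -
  have "powmean1 1 x powr (1 / ln 2) = ((1 + x) / 2) powr (1 / ln 2)"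
    using powmean1_powr_div_ln2[OF \<open>0 < x\<close>, of 1] assms by (simp add: add.commute)
  also have "\<dots> = exp (ln ((1 + x) / 2) / ln 2)"
    using assms by (simp add: powr_def)
  also have "\<dots> < identric1 x"
    using ln_arith_mean_div_ln2_less_ln_identric[OF assms] by (simp add: identric1_def)
  finally show ?thesis .
qed

lemma midpoint_powr_less:
  fixes a r :: real
  assumes a: "0 < a" "a \<noteq> 1" and r: "1 < r"
  shows "((a + 1) / 2) powr r < (a powr r + 1) / 2"
proof -
  define k where "k s = (s powr r + 1) / 2 - ((s + 1) / 2) powr r" for s :: real
  have k_deriv: "(k has_real_derivative r / 2 * (s powr (r - 1) - ((s + 1) / 2) powr (r - 1))) (at s)"
    if "0 < s" for s
    unfolding k_def
    apply (rule derivative_eq_intros refl | (use that in \<open>simp; fail\<close>))+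
    using that by (simp add: powr_diff field_simps)
  have "k 1 < k a"
  proof (cases "a < 1")
    case True
    show ?thesis
    proof (rule deriv_neg_interior_imp_greater[OF True k_deriv])
      fix s assume "a < s" "s < 1"
      then have "s powr (r - 1) < ((s + 1) / 2) powr (r - 1)"
        using a r by (intro powr_less_mono2) auto
      then show "r / 2 * (s powr (r - 1) - ((s + 1) / 2) powr (r - 1)) < 0"
        using r by (intro mult_pos_neg) auto
    qed (use a in auto)
  next
    case False
    then have "1 < a" using a by auto
    then show ?thesis
    proof (rule deriv_pos_interior_imp_less[OF _ k_deriv])
      fix s assume "1 < s" "s < a"
      then have "((s + 1) / 2) powr (r - 1) < s powr (r - 1)"
        using r by (intro powr_less_mono2) auto
      then show "r / 2 * (s powr (r - 1) - ((s + 1) / 2) powr (r - 1)) > 0"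
        using r by (intro mult_pos_pos) auto
    qed auto
  qed
  then show ?thesis
    by (simp add: k_def)
qed

lemma sqrt_less_midpoint:
  fixes y :: real
  assumes "0 < y" "y \<noteq> 1"
  shows "sqrt y < (y + 1) / 2"
proof -
  have "0 < (sqrt y - 1)^2"
    using assms by simp
  then show ?thesis
    using assms by (simp add: power2_eq_square algebra_simps)
qed

lemma powmean1_strict_mono_nonneg:
  fixes x p q :: real
  assumes x: "0 < x" "x \<noteq> 1" and pq: "0 \<le> p" "p < q"
  shows "powmean1 p x < powmean1 q x"
proof -
  define a where "a = x powr q"
  have a: "0 < a" "a \<noteq> 1"
    using x pq by (auto simp: a_def powr_inj[of x q 0, simplified])
  show ?thesis
  proof (cases "p = 0")
    case True
    have "sqrt a powr (1 / q) < ((a + 1) / 2) powr (1 / q)"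
      using sqrt_less_midpoint[OF a] pq a by (intro powr_less_mono2) auto
    moreover have "sqrt a powr (1 / q) = sqrt x"
      using pq x by (simp add: a_def powr_half_sqrt[symmetric] powr_powr)
    ultimately show ?thesis
      using True pq by (simp add: powmean1_def a_def)
  next
    case False
    define b where "b = x powr p"
    have b: "0 < b" "b \<noteq> 1"
      using x pq False by (auto simp: b_def powr_inj[of x p 0, simplified])
    have "((b + 1) / 2) powr (q / p) < (a + 1) / 2"
      using midpoint_powr_less[OF b, of "q / p"] pq False x by (simp add: a_def b_def powr_powr)
    then have "(((b + 1) / 2) powr (q / p)) powr (1 / q) < ((a + 1) / 2) powr (1 / q)"
      using pq b by (intro powr_less_mono2) auto
    then show ?thesis
      using pq False by (simp add: powmean1_nonzero a_def b_def powr_powr)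
  qed
qed

lemma powmean1_strict_mono:
  fixes x p q :: real
  assumes x: "0 < x" "x \<noteq> 1" and "p < q"
  shows "powmean1 p x < powmean1 q x"
proof -
  have reflected: "powmean1 u x < powmean1 v x" if "u < v" "v \<le> 0" for u v
  proof -
    have "powmean1 (- v) x < powmean1 (- u) x"
      using powmean1_strict_mono_nonneg[OF x, of "- v" "- u"] that by simp
    then have "x / powmean1 (- u) x < x / powmean1 (- v) x"
      using x powmean1_pos[OF \<open>0 < x\<close>, of "- v"] by (intro divide_strict_left_mono) auto
    then show ?thesis
      using powmean1_uminus[OF \<open>0 < x\<close>, of "- u"] powmean1_uminus[OF \<open>0 < x\<close>, of "- v"] by simp
  qed
  consider "0 \<le> p" | "q \<le> 0" | "p < 0" "0 < q"
    by linarith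
  then show ?thesis
  proof cases
    case 1
    then show ?thesis using powmean1_strict_mono_nonneg[OF x _ \<open>p < q\<close>] by simp
  next
    case 2
    then show ?thesis using reflected[OF \<open>p < q\<close>] by simp
  next
    case 3
    then show ?thesis
      using reflected[of p 0] powmean1_strict_mono_nonneg[OF x, of 0 q] by simp
  qed
qed

lemma powmean1_powr_div_ln2_strict_antimono:
  fixes x p q :: real
  assumes x: "0 < x" "x < 1" and "p < q"
  shows "powmean1 q x powr (q / ln 2) < powmean1 p x powr (p / ln 2)"
proof -
  have "x powr q < x powr p"
    using x \<open>p < q\<close> by (rule powr_less_mono')
  then have "((x powr q + 1) / 2) powr (1 / ln 2) < ((x powr p + 1) / 2) powr (1 / ln 2)"
    using powr_plus_one_pos[of x q] by (intro powr_less_mono2) auto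
  then show ?thesis
    using x by (simp add: powmean1_powr_div_ln2)
qed

lemma powr_sum_root_strict_antimono:
  fixes a b p q :: real
  assumes ab: "0 < a" "0 < b" and pq: "0 < p" "p < q"
  shows "(a powr q + b powr q) powr (1 / q) < (a powr p + b powr p) powr (1 / p)"
proof -
  define s where "s = a powr p + b powr p"
  have s: "0 < s"
    using ab by (simp add: s_def add_pos_pos)
  have r: "1 < q / p"
    using pq by simp
  have less_self: "(c / s) powr (q / p) < c / s" if "0 < c" "c < s" for c
    using powr_less_mono'[of "c / s" 1 "q / p"] that r s by simp
  have "(a powr q + b powr q) / s powr (q / p) = (a powr p / s) powr (q / p) + (b powr p / s) powr (q / p)"
    using ab s pq by (simp add: powr_divide powr_powr add_divide_distrib)
  also have "\<dots> < a powr p / s + b powr p / s"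
    using ab by (intro add_strict_mono less_self) (auto simp: s_def)
  also have "\<dots> = 1"
    using s by (simp add: s_def add_divide_distrib[symmetric])
  finally have "a powr q + b powr q < s powr (q / p)"
    using s by (simp add: divide_less_eq)
  then have "(a powr q + b powr q) powr (1 / q) < (s powr (q / p)) powr (1 / q)"
    using ab pq by (intro powr_less_mono2) (auto intro: add_pos_pos)
  then show ?thesis
    using pq by (simp add: s_def powr_powr)
qed

lemma scaled_powmean1_eq:
  assumes "p \<noteq> 0"
  shows "exp (-1) * 2 powr (1 / p) * powmean1 p x = exp (-1) * (x powr p + 1) powr (1 / p)"
proof -
  have "2 powr (1 / p) * ((x powr p + 1) / 2) powr (1 / p) = (2 * ((x powr p + 1) / 2)) powr (1 / p)"
    using powr_plus_one_pos[of x p] by (subst powr_mult) auto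
  also have "2 * ((x powr p + 1) / 2) = x powr p + 1"
    by simp
  finally show ?thesis
    using assms by (simp add: powmean1_nonzero)
qed

lemma scaled_powmean1_strict_antimono:
  assumes "0 < x" "0 < p" "p < q"
  shows "exp (-1) * 2 powr (1 / q) * powmean1 q x < exp (-1) * 2 powr (1 / p) * powmean1 p x"
  using powr_sum_root_strict_antimono[of x 1 p q] assms by (simp add: scaled_powmean1_eq)

text \<open>The last factor exceeds \<open>1\<close> exactly when \<open>p < ln 2\<close>; this decides the third inequality.\<close>

lemma scaled_powmean1_eq_powmean1_powr:
  assumes "0 < x" "p \<noteq> 0"
  shows "exp (-1) * 2 powr (1 / p) * powmean1 p x
    = powmean1 p x powr (p / ln 2) * (x powr p + 1) powr (1 / p - 1 / ln 2)"
proof -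
  define y where "y = x powr p + 1"
  have y: "0 < y"
    using powr_plus_one_pos[of x p] by (simp add: y_def)
  have "powmean1 p x powr (p / ln 2) * (x powr p + 1) powr (1 / p - 1 / ln 2)
      = (y / 2) powr (1 / ln 2) * y powr (1 / p - 1 / ln 2)"
    using assms by (simp add: powmean1_powr_div_ln2 y_def)
  also have "\<dots> = y powr (1 / p) / 2 powr (1 / ln 2)"
    using y by (simp add: powr_divide powr_add[symmetric])
  also have "(2::real) powr (1 / ln 2) = exp 1"
    by (simp add: powr_def)
  also have "y powr (1 / p) / exp 1 = exp (-1) * (x powr p + 1) powr (1 / p)"
    by (simp add: y_def exp_minus field_simps)
  also have "\<dots> = exp (-1) * 2 powr (1 / p) * powmean1 p x"
    by (rule scaled_powmean1_eq[OF \<open>p \<noteq> 0\<close>, symmetric])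
  finally show ?thesis
    by simp
qed

lemma powmean1_powr_less_scaled_powmean1:
  assumes "0 < x" "0 < p" "p < ln 2"
  shows "powmean1 p x powr (p / ln 2) < exp (-1) * 2 powr (1 / p) * powmean1 p x"
proof -
  have "1 < (x powr p + 1) powr (1 / p - 1 / ln 2)"
    using assms by (intro gr_one_powr) (auto simp: frac_less2)
  moreover have "0 < powmean1 p x powr (p / ln 2)"
    using powmean1_pos[OF \<open>0 < x\<close>, of p] by simp
  ultimately show ?thesis
    using assms by (simp add: scaled_powmean1_eq_powmean1_powr)
qed

lemma scaled_powmean1_less_powmean1_powr:
  assumes "0 < x" "ln 2 < p"
  shows "exp (-1) * 2 powr (1 / p) * powmean1 p x < powmean1 p x powr (p / ln 2)"
proof -
  have "0 < p"
    using assms(2) ln_2_gt_two_thirds by linarith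
  then have "(x powr p + 1) powr (1 / p - 1 / ln 2) < 1"
    using assms by (intro powr_less_one) (auto simp: frac_less2)
  moreover have "0 < powmean1 p x powr (p / ln 2)"
    using powmean1_pos[OF \<open>0 < x\<close>, of p] by simp
  ultimately show ?thesis
    using assms \<open>0 < p\<close> by (simp add: scaled_powmean1_eq_powmean1_powr)
qed

lemma identric1_tendsto_at_right_0: "(identric1 \<longlongrightarrow> exp (-1)) (at_right 0)"
  unfolding identric1_def[abs_def] by real_asymp

lemma identric1_tendsto_at_left_1: "(identric1 \<longlongrightarrow> 1) (at_left 1)"
  unfolding identric1_def[abs_def] by real_asymp

lemma powmean1_tendsto_at_right_0:
  assumes "0 < p"
  shows "(powmean1 p \<longlongrightarrow> (1 / 2) powr (1 / p)) (at_right 0)"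
proof -
  have "((\<lambda>x::real. x powr p) \<longlongrightarrow> 0) (at_right 0)"
    using assms by real_asymp
  then have "((\<lambda>x. ((x powr p + 1) / 2) powr (1 / p)) \<longlongrightarrow> ((0 + 1) / 2) powr (1 / p)) (at_right 0)"
    by (intro tendsto_intros) auto
  moreover have "powmean1 p = (\<lambda>x. ((x powr p + 1) / 2) powr (1 / p))"
    using assms by (auto simp: powmean1_nonzero)
  ultimately show ?thesis
    by simp
qed

lemma powmean1_tendsto_at_left_1:
  assumes "0 < p"
  shows "(powmean1 p \<longlongrightarrow> 1) (at_left 1)"
proof -
  have "((\<lambda>x. ((x powr p + 1) / 2) powr (1 / p)) \<longlongrightarrow> ((1 powr p + 1) / 2) powr (1 / p)) (at_left 1)"
    by (intro tendsto_intros tendsto_ident_at) auto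
  moreover have "powmean1 p = (\<lambda>x. ((x powr p + 1) / 2) powr (1 / p))"
    using assms by (auto simp: powmean1_nonzero)
  ultimately show ?thesis
    by simp
qed

lemma best_lower_constant:
  assumes "0 < p" and lower: "\<And>x. 0 < x \<Longrightarrow> x < 1 \<Longrightarrow> powmean1 p x < identric1 x"
  shows "{c. \<forall>x. 0 < x \<and> x < 1 \<longrightarrow> c * powmean1 p x \<le> identric1 x} = {..1}"
proof (intro set_eqI iffI)
  fix c assume "c \<in> {c. \<forall>x. 0 < x \<and> x < 1 \<longrightarrow> c * powmean1 p x \<le> identric1 x}"
  then have "eventually (\<lambda>x. c * powmean1 p x \<le> identric1 x) (at_left 1)"
    using eventually_at_left_real[of 0 1] by (auto elim: eventually_mono)
  then have "c * 1 \<le> 1"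
    using identric1_tendsto_at_left_1 powmean1_tendsto_at_left_1[OF \<open>0 < p\<close>]
    by (intro tendsto_le[of "at_left (1::real)" identric1 1 "\<lambda>x. c * powmean1 p x"] tendsto_intros) auto
  then show "c \<in> {..1}"
    by simp
next
  fix c :: real assume "c \<in> {..1}"
  show "c \<in> {c. \<forall>x. 0 < x \<and> x < 1 \<longrightarrow> c * powmean1 p x \<le> identric1 x}"
  proof (intro CollectI allI impI)
    fix x :: real assume x: "0 < x \<and> x < 1"
    have "c * powmean1 p x \<le> 1 * powmean1 p x"
      using \<open>c \<in> {..1}\<close> powmean1_pos[of x p] x by (intro mult_right_mono) auto
    also have "\<dots> \<le> identric1 x"
      using lower x by (simp add: less_imp_le)
    finally show "c * powmean1 p x \<le> identric1 x" .
  qed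
qed

lemma best_upper_constant:
  assumes "0 < p"
    and upper: "\<And>x. 0 < x \<Longrightarrow> x < 1 \<Longrightarrow> identric1 x < exp (-1) * 2 powr (1 / p) * powmean1 p x"
  shows "{C. \<forall>x. 0 < x \<and> x < 1 \<longrightarrow> identric1 x \<le> C * powmean1 p x} = {exp (-1) * 2 powr (1 / p)..}"
proof (intro set_eqI iffI)
  fix C assume "C \<in> {C. \<forall>x. 0 < x \<and> x < 1 \<longrightarrow> identric1 x \<le> C * powmean1 p x}"
  then have "eventually (\<lambda>x. identric1 x \<le> C * powmean1 p x) (at_right 0)"
    using eventually_at_right_real[of 0 1] by (auto elim: eventually_mono)
  then have "exp (-1) \<le> C * (1 / 2) powr (1 / p)"
    using identric1_tendsto_at_right_0 powmean1_tendsto_at_right_0[OF \<open>0 < p\<close>]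
    by (intro tendsto_le[of "at_right (0::real)" "\<lambda>x. C * powmean1 p x" _ identric1] tendsto_intros) auto
  then have "exp (-1) * 2 powr (1 / p) \<le> C * ((1 / 2) powr (1 / p) * 2 powr (1 / p))"
    by (simp add: mult_right_mono mult.assoc[symmetric])
  also have "(1 / 2) powr (1 / p) * 2 powr (1 / p) = (1::real)"
    by (simp add: powr_mult[symmetric])
  finally show "C \<in> {exp (-1) * 2 powr (1 / p)..}"
    by simp
next
  fix C assume "C \<in> {exp (-1) * 2 powr (1 / p)..}"
  show "C \<in> {C. \<forall>x. 0 < x \<and> x < 1 \<longrightarrow> identric1 x \<le> C * powmean1 p x}"
  proof (intro CollectI allI impI)
    fix x :: real assume x: "0 < x \<and> x < 1"
    have "identric1 x \<le> exp (-1) * 2 powr (1 / p) * powmean1 p x"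
      using upper x by (simp add: less_imp_le)
    also have "\<dots> \<le> C * powmean1 p x"
      using \<open>C \<in> {exp (-1) * 2 powr (1 / p)..}\<close> powmean1_pos[of x p] x by (intro mult_right_mono) auto
    finally show "identric1 x \<le> C * powmean1 p x" .
  qed
qed

lemma identric1_bounds_small_p:
  assumes p: "0 < p" "p \<le> 2/3" and x: "0 < x" "x < 1"
  shows "powmean1 p x < identric1 x"
    and "identric1 x < powmean1 p x powr (p / ln 2)"
    and "powmean1 p x powr (p / ln 2) < exp (-1) * 2 powr (1 / p) * powmean1 p x"
proof -
  have "powmean1 p x \<le> powmean1 (2/3) x"
  proof (cases "p = 2/3")
    case True
    then show ?thesis by (simp only: order_refl)
  next
    case False
    then show ?thesis using powmean1_strict_mono[of x p "2/3"] p x by simp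
  qed
  then show "powmean1 p x < identric1 x"
    using powmean1_two_thirds_less_identric1[OF x] by simp
  have "powmean1 (2/3) x powr ((2/3) / ln 2) \<le> powmean1 p x powr (p / ln 2)"
  proof (cases "p = 2/3")
    case True
    then show ?thesis by (simp only: order_refl)
  next
    case False
    then show ?thesis using powmean1_powr_div_ln2_strict_antimono[OF x, of p "2/3"] p by simp
  qed
  then show "identric1 x < powmean1 p x powr (p / ln 2)"
    using identric1_less_powmean1_two_thirds_powr[OF x] by simp
  show "powmean1 p x powr (p / ln 2) < exp (-1) * 2 powr (1 / p) * powmean1 p x"
    using powmean1_powr_less_scaled_powmean1 p x ln_2_gt_two_thirds by simp
qed

lemma identric1_bounds_large_p:
  assumes p: "1 \<le> p" and x: "0 < x" "x < 1"
  shows "identric1 x < powmean1 p x"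
    and "powmean1 p x powr (p / ln 2) < identric1 x"
    and "exp (-1) * 2 powr (1 / p) * powmean1 p x < powmean1 p x powr (p / ln 2)"
proof -
  have "powmean1 1 x \<le> powmean1 p x"
    using powmean1_strict_mono[of x 1 p] p x by (cases "p = 1") auto
  then show "identric1 x < powmean1 p x"
    using identric1_less_powmean1_one[OF x] by simp
  have "powmean1 p x powr (p / ln 2) \<le> powmean1 1 x powr (1 / ln 2)"
    using powmean1_powr_div_ln2_strict_antimono[OF x, of 1 p] p by (cases "p = 1") auto
  then show "powmean1 p x powr (p / ln 2) < identric1 x"
    using powmean1_one_powr_less_identric1[OF x] by simp
  show "exp (-1) * 2 powr (1 / p) * powmean1 p x < powmean1 p x powr (p / ln 2)"
    using scaled_powmean1_less_powmean1_powr p x ln_2_less_1 by simp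
qed

theorem mainTheorem10:
  shows
  "(\<forall>p. 0 < p \<and> p \<le> 2/3 \<longrightarrow>
      (\<forall>x. 0 < x \<and> x < 1 \<longrightarrow>
          powmean1 p x < identric1 x
        \<and> identric1 x < powmean1 p x powr (p / ln 2)
        \<and> powmean1 p x powr (p / ln 2) < exp (-1) * 2 powr (1 / p) * powmean1 p x)
    \<and> {c. \<forall>x. 0 < x \<and> x < 1 \<longrightarrow> c * powmean1 p x \<le> identric1 x} = {..1}
    \<and> {C. \<forall>x. 0 < x \<and> x < 1 \<longrightarrow> identric1 x \<le> C * powmean1 p x}
        = {exp (-1) * 2 powr (1 / p)..})
 \<and> (\<forall>p. 1 \<le> p \<longrightarrow>
      (\<forall>x. 0 < x \<and> x < 1 \<longrightarrow>
          powmean1 p x > identric1 x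
        \<and> identric1 x > powmean1 p x powr (p / ln 2)
        \<and> powmean1 p x powr (p / ln 2) > exp (-1) * 2 powr (1 / p) * powmean1 p x))
 \<and> (\<forall>x. 0 < x \<and> x < 1 \<longrightarrow>
      (\<forall>p q. p < q \<longrightarrow> powmean1 p x < powmean1 q x)
    \<and> (\<forall>p q. p < q \<longrightarrow> powmean1 q x powr (q / ln 2) < powmean1 p x powr (p / ln 2))
    \<and> (\<forall>p q. 0 < p \<and> p < q \<longrightarrow>
          exp (-1) * 2 powr (1 / q) * powmean1 q x < exp (-1) * 2 powr (1 / p) * powmean1 p x))"
proof (intro conjI allI impI; elim conjE)
  fix p :: real
  assume p: "0 < p" "p \<le> 2/3"
  note small = identric1_bounds_small_p[OF p]
  show "{c. \<forall>x. 0 < x \<and> x < 1 \<longrightarrow> c * powmean1 p x \<le> identric1 x} = {..1}"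
    using best_lower_constant[OF \<open>0 < p\<close> small(1)] .
  show "{C. \<forall>x. 0 < x \<and> x < 1 \<longrightarrow> identric1 x \<le> C * powmean1 p x} = {exp (-1) * 2 powr (1 / p)..}"
    using best_upper_constant[OF \<open>0 < p\<close> less_trans[OF small(2,3)]] .
qed (blast intro: identric1_bounds_small_p identric1_bounds_large_p powmean1_strict_mono
  powmean1_powr_div_ln2_strict_antimono scaled_powmean1_strict_antimono)+

end
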